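(* Let $n\ge2$ and $|\psi\rangle_{ABS}\in\mathbb{C}^2\otimes\mathbb{C}^2\otimes\mathbb{C}^n$. For orthonormal bases $\{|i\rangle_A\}_{i=0,1}$, $\{|j\rangle_B\}_{j=0,1}$, $\{|l\rangle_S\}_{l=1,\dots,n}$, write $a^l_{ij}={}_A\langle i|{}_B\langle j|{}_S\langle l|\psi\rangle_{ABS}$ and let $A^l$ be the $2\times2$ matrix with entries $(A^l)_{ij}=a^l_{ij}$. Then there exist orthonormal bases of Alice's, Bob's and Sapna's spaces such that the matrices $A^{l\dagger}A^l$ are diagonal for all $l$; similarly, there exist (possibly different) orthonormal bases such that the matrices $A^lA^{l\dagger}$ are diagonal for all $l$. *)

theory Defs
  imports Complex_Main
begin

text \<open>A state psi in C^2 (x) C^2 (x) C^d is represented by its coefficient function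
  psi i j l (i<2, j<2, l<d) in the standard product basis.
  An orthonormal basis of C^d is a family e k (k<d) of vectors with components e k t (t<d)
  satisfying the orthonormality relations (d orthonormal vectors in C^d form a basis).\<close>

definition orthonormal_basis :: "nat \<Rightarrow> (nat \<Rightarrow> nat \<Rightarrow> complex) \<Rightarrow> bool" where
  "orthonormal_basis d e \<longleftrightarrow>
     (\<forall>k<d. \<forall>m<d. (\<Sum>t<d. cnj (e k t) * e m t) = (if k = m then 1 else 0))"

definition coeff ::
  "nat \<Rightarrow> (nat \<Rightarrow> nat \<Rightarrow> complex) \<Rightarrow> (nat \<Rightarrow> nat \<Rightarrow> complex) \<Rightarrow> (nat \<Rightarrow> nat \<Rightarrow> complex)
   \<Rightarrow> (nat \<Rightarrow> nat \<Rightarrow> nat \<Rightarrow> complex) \<Rightarrow> nat \<Rightarrow> nat \<Rightarrow> nat \<Rightarrow> complex" where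
  "coeff d eA eB eS psi l i j =
     (\<Sum>i'<2. \<Sum>j'<2. \<Sum>l'<d. cnj (eA i i') * cnj (eB j j') * cnj (eS l l') * psi i' j' l')"

definition adj_mult :: "(nat \<Rightarrow> nat \<Rightarrow> complex) \<Rightarrow> nat \<Rightarrow> nat \<Rightarrow> complex" where
  "adj_mult M i k = (\<Sum>j<2. cnj (M j i) * M j k)"

definition mult_adj :: "(nat \<Rightarrow> nat \<Rightarrow> complex) \<Rightarrow> nat \<Rightarrow> nat \<Rightarrow> complex" where
  "mult_adj M i k = (\<Sum>j<2. M i j * cnj (M k j))"

definition diagonal2 :: "(nat \<Rightarrow> nat \<Rightarrow> complex) \<Rightarrow> bool" where
  "diagonal2 N \<longleftrightarrow> (\<forall>i<2. \<forall>k<2. i \<noteq> k \<longrightarrow> N i k = 0)"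

end

theory Submission
  imports Defs
begin

text \<open>Take Alice's basis to be the standard one. For Bob's basis \<open>e\<close> let \<open>\<phi>\<^sub>a\<^sub>j\<close> be the
  vector of \<open>\<CC>\<^sup>n\<close> with components \<open>\<Sum>\<^sub>b cnj (e j b) \<psi> a b t\<close>. Then \<open>a\<^sup>l\<^sub>i\<^sub>j = \<langle>f\<^sub>l, \<phi>\<^sub>i\<^sub>j\<rangle>\<close> for
  Sapna's basis \<open>f\<close>, and the off-diagonal entry of \<open>A\<^sup>l\<^sup>\<dagger>A\<^sup>l\<close> is \<open>f\<^sub>l\<^sup>* M f\<^sub>l\<close> for the single
  \<open>n \<times> n\<close> matrix \<open>M = \<Sum>\<^sub>a \<phi>\<^sub>a\<^sub>1 \<phi>\<^sub>a\<^sub>0\<^sup>*\<close>. Its trace \<open>\<Sum>\<^sub>a \<langle>\<phi>\<^sub>a\<^sub>0, \<phi>\<^sub>a\<^sub>1\<rangle>\<close> is an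
  off-diagonal entry of Bob's \<open>2 \<times> 2\<close> Gram matrix, which vanishes once \<open>e\<close> triangularizes that
  matrix (an eigenvector completed to an orthonormal basis). A trace-zero matrix has zero diagonal in
  some orthonormal basis, by convexity of the numerical range (Toeplitz--Hausdorff) and induction on
  the dimension; that basis is Sapna's. Exchanging Alice and Bob transposes every \<open>A\<^sup>l\<close>, which gives
  the statement for \<open>A\<^sup>lA\<^sup>l\<^sup>\<dagger>\<close>.\<close>

section \<open>Sesquilinear forms on complex coordinate spaces\<close>

definition cinner :: "nat \<Rightarrow> (nat \<Rightarrow> complex) \<Rightarrow> (nat \<Rightarrow> complex) \<Rightarrow> complex" where
  "cinner n x y = (\<Sum>t<n. cnj (x t) * y t)"

definition sesq ::
  "nat \<Rightarrow> (nat \<Rightarrow> nat \<Rightarrow> complex) \<Rightarrow> (nat \<Rightarrow> complex) \<Rightarrow> (nat \<Rightarrow> complex) \<Rightarrow> complex" where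
  "sesq n K x y = (\<Sum>s<n. \<Sum>t<n. cnj (x s) * K s t * y t)"

definition mat_trace :: "nat \<Rightarrow> (nat \<Rightarrow> nat \<Rightarrow> complex) \<Rightarrow> complex" where
  "mat_trace n K = (\<Sum>i<n. K i i)"

definition unit_vec :: "nat \<Rightarrow> nat \<Rightarrow> complex" where
  "unit_vec k = (\<lambda>t. if k = t then 1 else 0)"

lemma orthonormal_basis_iff_cinner:
  "orthonormal_basis n e \<longleftrightarrow> (\<forall>k<n. \<forall>m<n. cinner n (e k) (e m) = unit_vec k m)"
  by (simp add: orthonormal_basis_def cinner_def unit_vec_def)

lemma cinner_commute: "cinner n y x = cnj (cinner n x y)"
  by (simp add: cinner_def cnj_sum mult.commute)

lemma cinner_self: "cinner n x x = of_real (\<Sum>t<n. (cmod (x t))\<^sup>2)"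
  by (simp add: cinner_def of_real_sum mult.commute flip: complex_norm_square)

lemma unit_vec_self [simp]: "unit_vec k k = 1"
  by (simp add: unit_vec_def)

lemma unit_vec_commute: "unit_vec k m = unit_vec m k"
  by (simp add: unit_vec_def)

lemma cnj_unit_vec [simp]: "cnj (unit_vec k t) = unit_vec k t"
  by (simp add: unit_vec_def)

lemma sum_unit_vec_mult: "k < n \<Longrightarrow> (\<Sum>t<n. unit_vec k t * f t) = f k"
  by (subst sum.cong[OF refl, of _ _ "\<lambda>t. if k = t then f t else 0"]) (auto simp: unit_vec_def)

lemma sum_mult_unit_vec: "k < n \<Longrightarrow> (\<Sum>t<n. f t * unit_vec k t) = f k"
  using sum_unit_vec_mult[of k n f] by (simp add: mult.commute)

lemma cinner_unit_vec_left: "k < n \<Longrightarrow> cinner n (unit_vec k) y = y k"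
  by (simp add: cinner_def sum_unit_vec_mult)

lemma cinner_unit_vec_right: "k < n \<Longrightarrow> cinner n x (unit_vec k) = cnj (x k)"
  by (simp add: cinner_def sum_mult_unit_vec)

lemma cinner_unit_vec_self: "k < n \<Longrightarrow> cinner n (unit_vec k) (unit_vec k) = 1"
  by (simp add: cinner_unit_vec_left)

lemma sesq_unit_vec: "k < n \<Longrightarrow> sesq n K (unit_vec k) (unit_vec k) = K k k"
  by (simp add: sesq_def mult.assoc sum_mult_unit_vec sum_unit_vec_mult flip: sum_distrib_left)

lemma orthonormal_basis_unit_vec: "orthonormal_basis n unit_vec"
  by (simp add: orthonormal_basis_iff_cinner cinner_unit_vec_left, simp add: unit_vec_def)

lemma cinner_lincomb:
  "cinner n (\<lambda>t. a * x t + b * z t) (\<lambda>t. a * x t + b * z t) =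
   cnj a * a * cinner n x x + cnj a * b * cinner n x z + cnj b * a * cinner n z x + cnj b * b * cinner n z z"
  by (simp add: cinner_def sum.distrib sum_distrib_left algebra_simps)

lemma sesq_lincomb:
  "sesq n K (\<lambda>t. a * x t + b * z t) (\<lambda>t. a * x t + b * z t) =
   cnj a * a * sesq n K x x + cnj a * b * sesq n K x z + cnj b * a * sesq n K z x + cnj b * b * sesq n K z z"
  by (simp add: sesq_def sum.distrib sum_distrib_left algebra_simps)

lemma cinner_scale: "cinner n (\<lambda>t. a * x t) (\<lambda>t. b * y t) = cnj a * b * cinner n x y"
  by (simp add: cinner_def sum_distrib_left mult_ac)

lemma sesq_eq_cinner_mult: "sesq n K x y = cinner n x (\<lambda>s. \<Sum>t<n. K s t * y t)"
  by (simp add: sesq_def cinner_def sum_distrib_left mult.assoc)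

lemma cinner_eq_sesq_unit_vec: "cinner n x y = sesq n unit_vec x y"
  by (simp add: sesq_eq_cinner_mult cinner_def sum_unit_vec_mult)

lemma sesq_cong:
  "(\<And>s t. s < n \<Longrightarrow> t < n \<Longrightarrow> K s t = L s t) \<Longrightarrow> sesq n K x y = sesq n L x y"
  by (simp add: sesq_def)

lemma sesq_outer_sum:
  "sesq n (\<lambda>s t. \<Sum>a\<in>A. v a s * cnj (u a t)) e e = (\<Sum>a\<in>A. cnj (cinner n e (u a)) * cinner n e (v a))"
proof -
  let ?F = "\<lambda>a s t. (cnj (e s) * v a s) * (cnj (u a t) * e t)"
  have "sesq n (\<lambda>s t. \<Sum>a\<in>A. v a s * cnj (u a t)) e e = (\<Sum>s<n. \<Sum>t<n. \<Sum>a\<in>A. ?F a s t)"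
    by (simp add: sesq_def sum_distrib_left sum_distrib_right mult_ac)
  also have "\<dots> = (\<Sum>s<n. \<Sum>a\<in>A. \<Sum>t<n. ?F a s t)"
    by (rule sum.cong[OF refl], rule sum.swap)
  also have "\<dots> = (\<Sum>a\<in>A. \<Sum>s<n. \<Sum>t<n. ?F a s t)"
    by (rule sum.swap)
  also have "\<dots> = (\<Sum>a\<in>A. cinner n e (v a) * cinner n (u a) e)"
    by (simp add: cinner_def sum_product)
  finally show ?thesis
    by (simp add: cinner_commute[of n "u _"] mult.commute)
qed

lemma mat_trace_outer_sum:
  "mat_trace n (\<lambda>s t. \<Sum>a\<in>A. v a s * cnj (u a t)) = (\<Sum>a\<in>A. cinner n (u a) (v a))"
  unfolding mat_trace_def cinner_def by (subst sum.swap) (simp add: mult.commute)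

lemma sesq_change_basis:
  "sesq m K (\<lambda>t. \<Sum>i<m. c i * U i t) (\<lambda>t. \<Sum>j<m. d j * U j t) =
   sesq m (\<lambda>i j. sesq m K (U i) (U j)) c d"
proof -
  let ?F = "\<lambda>i j s t. cnj (c i) * (cnj (U i s) * K s t * U j t) * d j"
  have "sesq m K (\<lambda>t. \<Sum>i<m. c i * U i t) (\<lambda>t. \<Sum>j<m. d j * U j t) =
    (\<Sum>s<m. \<Sum>t<m. \<Sum>i<m. \<Sum>j<m. ?F i j s t)"
    by (simp add: sesq_def cnj_sum sum_distrib_left sum_distrib_right mult_ac)
  also have "\<dots> = (\<Sum>s<m. \<Sum>i<m. \<Sum>t<m. \<Sum>j<m. ?F i j s t)"
    by (rule sum.cong[OF refl], rule sum.swap)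
  also have "\<dots> = (\<Sum>i<m. \<Sum>s<m. \<Sum>t<m. \<Sum>j<m. ?F i j s t)"
    by (rule sum.swap)
  also have "\<dots> = (\<Sum>i<m. \<Sum>s<m. \<Sum>j<m. \<Sum>t<m. ?F i j s t)"
    by (rule sum.cong[OF refl], rule sum.cong[OF refl], rule sum.swap)
  also have "\<dots> = (\<Sum>i<m. \<Sum>j<m. \<Sum>s<m. \<Sum>t<m. ?F i j s t)"
    by (rule sum.cong[OF refl], rule sum.swap)
  also have "\<dots> = sesq m (\<lambda>i j. sesq m K (U i) (U j)) c d"
    by (simp add: sesq_def sum_distrib_left sum_distrib_right)
  finally show ?thesis .
qed

lemma orthonormal_basis_change_basis:
  assumes "orthonormal_basis m U" and "orthonormal_basis m c"
  shows "orthonormal_basis m (\<lambda>l t. \<Sum>i<m. c l i * U i t)"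
proof -
  have "cinner m (\<lambda>t. \<Sum>i<m. c k i * U i t) (\<lambda>t. \<Sum>i<m. c l i * U i t) = cinner m (c k) (c l)" for k l
  proof -
    have "cinner m (\<lambda>t. \<Sum>i<m. c k i * U i t) (\<lambda>t. \<Sum>i<m. c l i * U i t) =
        sesq m (\<lambda>i j. cinner m (U i) (U j)) (c k) (c l)"
      by (simp only: cinner_eq_sesq_unit_vec sesq_change_basis)
    also have "\<dots> = sesq m unit_vec (c k) (c l)"
      using assms(1) by (intro sesq_cong) (simp add: orthonormal_basis_iff_cinner)
    finally show ?thesis
      by (simp only: cinner_eq_sesq_unit_vec)
  qed
  with assms(2) show ?thesis
    by (simp add: orthonormal_basis_iff_cinner)
qed

lemma sum_sesq_eq_mat_trace:
  assumes "orthonormal_basis m (\<lambda>i j. U j i)"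
  shows "(\<Sum>i<m. sesq m K (U i) (U i)) = mat_trace m K"
proof -
  let ?F = "\<lambda>i s t. K s t * (cnj (U i s) * U i t)"
  have "(\<Sum>i<m. sesq m K (U i) (U i)) = (\<Sum>i<m. \<Sum>s<m. \<Sum>t<m. ?F i s t)"
    by (simp add: sesq_def mult_ac)
  also have "\<dots> = (\<Sum>s<m. \<Sum>t<m. \<Sum>i<m. ?F i s t)"
    by (subst sum.swap) (rule sum.cong[OF refl], rule sum.swap)
  also have "\<dots> = (\<Sum>s<m. \<Sum>t<m. K s t * unit_vec s t)"
    using assms by (simp add: orthonormal_basis_def unit_vec_def flip: sum_distrib_left)
  also have "\<dots> = mat_trace m K"
    by (simp add: mat_trace_def sum_mult_unit_vec)
  finally show ?thesis .
qed

section \<open>Convexity of the numerical range\<close>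

lemma exists_phase_real: "\<exists>w. cmod w = 1 \<and> w * p + cnj w * q \<in> \<real>"
proof -
  define D where "D = p - cnj q"
  define w where "w = (if D = 0 then 1 else cnj (sgn D))"
  have "Im (w * D) = 0"
    by (simp add: w_def sgn_eq)
  then have "Im (w * p + cnj w * q) = 0"
    by (simp add: D_def algebra_simps)
  moreover have "cmod w = 1"
    by (simp add: w_def norm_sgn)
  ultimately show ?thesis
    by (auto simp: complex_is_Real_iff)
qed

lemma exists_segment_parameter:
  fixes \<sigma> \<tau> :: real
  assumes "0 \<le> \<tau>" "\<tau> \<le> 1"
  shows "\<exists>u. 0 \<le> u \<and> u \<le> 1 \<and> u + \<sigma> * sqrt (u * (1 - u)) = \<tau>"
proof -
  let ?g = "\<lambda>u. u + \<sigma> * sqrt (u * (1 - u))"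
  have "continuous_on {0..1} ?g"
    by (intro continuous_intros)
  with assms show ?thesis
    using IVT'[of ?g 0 \<tau> 1] by auto
qed

text \<open>The 2-dimensional case of the Toeplitz--Hausdorff theorem: a phase \<open>w\<close> makes the cross term
  of the quadratic form on \<open>\<surd>(1-u) x + \<surd>u w z\<close> a real multiple of \<open>z\<^sup>*Kz - x\<^sup>*Kx\<close>, so moving
  \<open>u\<close> from 0 to 1 sweeps the whole segment.\<close>

lemma numerical_range_segment:
  assumes x: "cinner n x x = 1" and z: "cinner n z z = 1" and xz: "cinner n x z = 0"
    and "0 \<le> \<tau>" "\<tau> \<le> 1"
  shows "\<exists>a b. cinner n (\<lambda>t. a * x t + b * z t) (\<lambda>t. a * x t + b * z t) = 1 \<and>
    sesq n K (\<lambda>t. a * x t + b * z t) (\<lambda>t. a * x t + b * z t) =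
      sesq n K x x + of_real \<tau> * (sesq n K z z - sesq n K x x)"
proof (cases "sesq n K z z = sesq n K x x")
  case True
  then show ?thesis
    using x by (intro exI[of _ 1] exI[of _ 0]) (simp add: cinner_lincomb sesq_lincomb)
next
  case False
  define \<delta> where "\<delta> = sesq n K z z - sesq n K x x"
  have "\<delta> \<noteq> 0"
    using False by (simp add: \<delta>_def)
  obtain w where w: "cmod w = 1"
    and "w * (sesq n K x z / \<delta>) + cnj w * (sesq n K z x / \<delta>) \<in> \<real>"
    using exists_phase_real by blast
  then obtain \<sigma> where \<sigma>: "w * sesq n K x z + cnj w * sesq n K z x = of_real \<sigma> * \<delta>"
    using \<open>\<delta> \<noteq> 0\<close> by (auto elim!: Reals_cases simp: field_simps)
  obtain u where "0 \<le> u" "u \<le> 1" and u: "u + \<sigma> * sqrt (u * (1 - u)) = \<tau>"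
    using exists_segment_parameter assms by blast
  define a where "a = complex_of_real (sqrt (1 - u))"
  define b where "b = complex_of_real (sqrt u) * w"
  have ww: "cnj w * w = 1"
    using w by (simp add: mult.commute flip: complex_norm_square)
  have aa: "cnj a * a = of_real (1 - u)" and bb: "cnj b * b = of_real u"
    using \<open>0 \<le> u\<close> \<open>u \<le> 1\<close> ww
    by (simp_all add: a_def b_def mult_ac flip: of_real_mult)
  have ab: "cnj a * b = of_real (sqrt (u * (1 - u))) * w"
    and ba: "cnj b * a = of_real (sqrt (u * (1 - u))) * cnj w"
    by (simp_all add: a_def b_def real_sqrt_mult mult_ac)
  have zx: "cinner n z x = 0"
    using xz by (simp add: cinner_commute[of n z])
  have "sesq n K (\<lambda>t. a * x t + b * z t) (\<lambda>t. a * x t + b * z t) =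
      of_real (1 - u) * sesq n K x x + of_real u * sesq n K z z +
      of_real (sqrt (u * (1 - u))) * (w * sesq n K x z + cnj w * sesq n K z x)"
    unfolding sesq_lincomb aa bb ab ba by (simp add: algebra_simps)
  also have "\<dots> = sesq n K x x + of_real \<tau> * \<delta>"
    by (simp add: \<sigma> \<delta>_def algebra_simps flip: u)
  finally show ?thesis
    using x z xz zx
    by (intro exI[of _ a] exI[of _ b]) (simp add: cinner_lincomb aa bb \<delta>_def flip: of_real_add)
qed

lemma numerical_range_diagonal_mean:
  assumes "k < n"
  shows "\<exists>x. (\<forall>t>k. x t = 0) \<and> cinner n x x = 1 \<and> sesq n K x x = (\<Sum>i\<le>k. K i i) / of_nat (Suc k)"
  using assms
proof (induction k)
  case 0
  then show ?case
    using cinner_unit_vec_self[of 0 n] sesq_unit_vec[of 0 n K]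
    by (intro exI[of _ "unit_vec 0"]) (simp add: unit_vec_def)
next
  case (Suc k)
  then obtain x where supp: "\<forall>t>k. x t = 0" and x: "cinner n x x = 1"
    and mean: "sesq n K x x = (\<Sum>i\<le>k. K i i) / of_nat (Suc k)"
    by auto
  let ?z = "unit_vec (Suc k)"
  have "cinner n x ?z = 0"
    using Suc.prems supp by (simp add: cinner_unit_vec_right)
  moreover have "cinner n ?z ?z = 1"
    using Suc.prems by (rule cinner_unit_vec_self)
  ultimately obtain a b where
    unit: "cinner n (\<lambda>t. a * x t + b * ?z t) (\<lambda>t. a * x t + b * ?z t) = 1" and
    Qy: "sesq n K (\<lambda>t. a * x t + b * ?z t) (\<lambda>t. a * x t + b * ?z t) =
      sesq n K x x + of_real (1 / real (Suc (Suc k))) * (sesq n K ?z ?z - sesq n K x x)"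
    using numerical_range_segment[OF x, of ?z "1 / real (Suc (Suc k))" K] by auto
  define y where "y = (\<lambda>t. a * x t + b * ?z t)"
  have "sesq n K y y = (\<Sum>i\<le>Suc k. K i i) / of_nat (Suc (Suc k))"
  proof -
    define c :: complex where "c = of_nat (Suc k)"
    have "c \<noteq> 0" "c + 1 \<noteq> 0"
      unfolding c_def by (metis of_nat_neq_0, metis of_nat_Suc add.commute of_nat_neq_0)
    then have "S / c + 1 / (c + 1) * (K' - S / c) = (S + K') / (c + 1)" for S K'
      by (simp add: divide_simps) (simp add: algebra_simps)
    then show ?thesis
      using Qy sesq_unit_vec[OF Suc.prems] unfolding y_def mean by (simp add: c_def add.commute)
  qed
  moreover have "\<forall>t>Suc k. y t = 0"
    using supp by (simp add: y_def unit_vec_def)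
  moreover have "cinner n y y = 1"
    using unit by (simp only: y_def)
  ultimately show ?case
    by (intro exI[of _ y]) simp
qed

lemma exists_isotropic_unit_vector:
  assumes "0 < n" and "mat_trace n K = 0"
  shows "\<exists>x. cinner n x x = 1 \<and> sesq n K x x = 0"
proof -
  have "{..n - 1} = {..<n}"
    using assms(1) by auto
  then show ?thesis
    using numerical_range_diagonal_mean[of "n - 1" n K] assms by (auto simp: mat_trace_def)
qed

section \<open>Completing a unit vector to a unitary matrix\<close>

definition unitary :: "nat \<Rightarrow> (nat \<Rightarrow> nat \<Rightarrow> complex) \<Rightarrow> bool" where
  "unitary n U \<longleftrightarrow> orthonormal_basis n U \<and> orthonormal_basis n (\<lambda>i j. U j i)"

lemma hermitian_involution_unitary:
  assumes herm: "\<And>s t. s < m \<Longrightarrow> t < m \<Longrightarrow> cnj (H s t) = H t s"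
    and inv: "\<And>s t. s < m \<Longrightarrow> t < m \<Longrightarrow> (\<Sum>k<m. H s k * H k t) = unit_vec s t"
    and "cmod c = 1"
  shows "unitary m (\<lambda>k t. c * H t k)"
proof -
  have "cnj c * c = 1"
    using assms(3) by (simp add: mult.commute flip: complex_norm_square)
  then have phase: "cnj (c * a) * (c * b) = cnj a * b" for a b
    by (metis (no_types, lifting) complex_cnj_mult mult.assoc mult.left_commute mult_1)
  have "(\<Sum>t<m. cnj (H t k) * H t j) = unit_vec k j"
    and "(\<Sum>t<m. cnj (H k t) * H j t) = unit_vec k j" if "k < m" "j < m" for k j
  proof -
    have "(\<Sum>t<m. cnj (H t k) * H t j) = (\<Sum>t<m. H k t * H t j)"
      using that by (intro sum.cong) (simp_all add: herm)
    then show "(\<Sum>t<m. cnj (H t k) * H t j) = unit_vec k j"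
      using inv that by simp
    have "(\<Sum>t<m. cnj (H k t) * H j t) = (\<Sum>t<m. H j t * H t k)"
      using that by (intro sum.cong) (simp_all add: herm mult.commute)
    then show "(\<Sum>t<m. cnj (H k t) * H j t) = unit_vec k j"
      using inv that by (simp add: unit_vec_commute)
  qed
  then show ?thesis
    by (simp only: unitary_def orthonormal_basis_def phase) (simp add: unit_vec_def)
qed

lemma householder_hermitian_involution:
  assumes N: "cinner m w w \<noteq> 0"
  defines "H \<equiv> \<lambda>s t. unit_vec s t - 2 * w s * cnj (w t) / cinner m w w"
  shows "cnj (H s t) = H t s"
    and "s < m \<Longrightarrow> t < m \<Longrightarrow> (\<Sum>k<m. H s k * H k t) = unit_vec s t"
proof -
  define N where "N = cinner m w w"
  have cN: "cnj N = N"
    by (simp add: N_def cinner_self)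
  show "cnj (H s t) = H t s"
    by (simp add: H_def cN flip: N_def) (simp add: unit_vec_commute mult.commute)
  assume "s < m" "t < m"
  let ?p = "2 * w s * cnj (w t) / N"
  have "(\<Sum>k<m. H s k * H k t) =
      (\<Sum>k<m. unit_vec s k * unit_vec k t - unit_vec s k * (2 * w k * cnj (w t) / N)
        - 2 * w s * cnj (w k) / N * unit_vec k t + 4 * w s * cnj (w t) / (N * N) * (cnj (w k) * w k))"
    unfolding H_def N_def[symmetric] by (intro sum.cong refl) (simp add: algebra_simps)
  also have "\<dots> = unit_vec s t - ?p - ?p + 4 * w s * cnj (w t) / (N * N) * N"
  proof -
    have t: "(\<Sum>k<m. f k * unit_vec k t) = f t" for f
      using \<open>t < m\<close> sum_mult_unit_vec[of t m f] by (simp add: unit_vec_commute)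
    have "(\<Sum>k<m. cnj (w k) * w k) = N"
      by (simp add: N_def cinner_def)
    then show ?thesis
      by (simp only: sum.distrib sum_subtractf sum_unit_vec_mult[OF \<open>s < m\<close>] t flip: sum_distrib_left)
  qed
  also have "\<dots> = unit_vec s t"
    using N by (simp add: N_def field_simps)
  finally show "(\<Sum>k<m. H s k * H k t) = unit_vec s t" .
qed

text \<open>Householder reflection: with \<open>c\<close> the phase of \<open>x 0\<close> and \<open>w = x + c e\<^sub>0\<close> (never zero, unlike
  \<open>x - c e\<^sub>0\<close>), the reflection \<open>H\<close> in \<open>w\<^sup>\<bottom>\<close> maps \<open>e\<^sub>0\<close> to \<open>-cnj c x\<close>.\<close>

lemma unit_vector_extends_to_unitary:
  assumes x: "cinner m x x = 1" and "0 < m"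
  shows "\<exists>U. unitary m U \<and> (\<forall>t<m. U 0 t = x t)"
proof -
  define r where "r = cmod (x 0)"
  define c where "c = (if x 0 = 0 then 1 else sgn (x 0))"
  have "cmod c = 1"
    by (simp add: c_def norm_sgn)
  then have cc: "cnj c * c = 1"
    by (simp add: mult.commute flip: complex_norm_square)
  have x0: "x 0 = of_real r * c"
    by (simp add: r_def c_def sgn_eq)
  define w where "w = (\<lambda>t. 1 * x t + c * unit_vec 0 t)"
  have N: "cinner m w w = 2 + 2 * of_real r"
  proof -
    have "cinner m w w = 2 + c * cnj (x 0) + cnj c * x 0"
      using x cc \<open>0 < m\<close> unfolding w_def cinner_lincomb
      by (simp add: cinner_unit_vec_left cinner_unit_vec_right cinner_unit_vec_self)
    also have "\<dots> = 2 + 2 * of_real r"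
      using cc by (simp add: x0 algebra_simps)
    finally show ?thesis .
  qed
  have "2 + 2 * r \<noteq> 0"
    using norm_ge_zero[of "x 0"] unfolding r_def by linarith
  then have "2 + 2 * of_real r \<noteq> (0::complex)"
    by (metis of_real_eq_0_iff of_real_add of_real_mult of_real_numeral)
  then have N0: "cinner m w w \<noteq> 0"
    by (simp add: N)
  define H where "H = (\<lambda>s t. unit_vec s t - 2 * w s * cnj (w t) / cinner m w w)"
  have "unitary m (\<lambda>k t. - c * H t k)"
    using householder_hermitian_involution[OF N0] \<open>cmod c = 1\<close>
    by (intro hermitian_involution_unitary) (simp_all add: H_def)
  moreover have "- c * H t 0 = x t" for t
  proof -
    have "cnj (w 0) = (1 + of_real r) * cnj c"
      by (simp add: w_def x0 algebra_simps)
    then have "2 * cnj (w 0) / cinner m w w = cnj c"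
      using \<open>2 + 2 * of_real r \<noteq> 0\<close> unfolding N by (simp add: field_simps)
    then have "H t 0 = unit_vec t 0 - w t * cnj c"
      by (simp add: H_def flip: times_divide_eq_right)
    then have "- c * H t 0 = (cnj c * c) * w t - c * unit_vec t 0"
      by (simp only:) (simp add: algebra_simps)
    then show ?thesis
      using cc by (simp add: w_def unit_vec_commute)
  qed
  ultimately show ?thesis
    by blast
qed

section \<open>Trace-zero matrices have zero diagonal in some orthonormal basis\<close>

definition shift_vec :: "(nat \<Rightarrow> complex) \<Rightarrow> nat \<Rightarrow> complex" where
  "shift_vec v i = (case i of 0 \<Rightarrow> 0 | Suc i \<Rightarrow> v i)"

definition lift_basis :: "(nat \<Rightarrow> nat \<Rightarrow> complex) \<Rightarrow> nat \<Rightarrow> nat \<Rightarrow> complex" where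
  "lift_basis h l = (case l of 0 \<Rightarrow> unit_vec 0 | Suc l \<Rightarrow> shift_vec (h l))"

lemma cinner_shift_vec: "cinner (Suc n) (shift_vec x) (shift_vec y) = cinner n x y"
  by (simp add: cinner_def shift_vec_def sum.lessThan_Suc_shift del: sum.lessThan_Suc)

lemma sesq_shift_vec:
  "sesq (Suc n) K (shift_vec x) (shift_vec y) = sesq n (\<lambda>i j. K (Suc i) (Suc j)) x y"
  by (simp add: sesq_def shift_vec_def sum.lessThan_Suc_shift del: sum.lessThan_Suc)

lemma orthonormal_basis_lift_basis:
  assumes "orthonormal_basis n h"
  shows "orthonormal_basis (Suc n) (lift_basis h)"
  unfolding orthonormal_basis_iff_cinner
proof (intro allI impI)
  fix k m assume "k < Suc n" "m < Suc n"
  then show "cinner (Suc n) (lift_basis h k) (lift_basis h m) = unit_vec k m"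
    using assms
    by (cases k; cases m)
      (auto simp: lift_basis_def cinner_unit_vec_self cinner_unit_vec_left cinner_unit_vec_right
        cinner_shift_vec orthonormal_basis_iff_cinner, auto simp: shift_vec_def unit_vec_def)
qed

theorem exists_orthonormal_basis_zero_diagonal:
  "mat_trace n K = 0 \<Longrightarrow> \<exists>g. orthonormal_basis n g \<and> (\<forall>l<n. sesq n K (g l) (g l) = 0)"
proof (induction n arbitrary: K)
  case 0
  then show ?case
    by (simp add: orthonormal_basis_def)
next
  case (Suc n)
  obtain x where x: "cinner (Suc n) x x = 1" and Kx: "sesq (Suc n) K x x = 0"
    using exists_isotropic_unit_vector Suc.prems by blast
  obtain U where U: "unitary (Suc n) U" and U0: "\<forall>t<Suc n. U 0 t = x t"
    using unit_vector_extends_to_unitary[OF x] by blast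
  define K' where "K' i j = sesq (Suc n) K (U i) (U j)" for i j
  have "K' 0 0 = 0"
    using Kx U0 by (simp add: K'_def sesq_def)
  moreover have "mat_trace (Suc n) K' = 0"
    using sum_sesq_eq_mat_trace[of "Suc n" U K] U Suc.prems
    by (simp add: K'_def mat_trace_def unitary_def)
  ultimately have "mat_trace n (\<lambda>i j. K' (Suc i) (Suc j)) = 0"
    by (simp add: mat_trace_def sum.lessThan_Suc_shift del: sum.lessThan_Suc)
  then obtain h where h: "orthonormal_basis n h"
    and hK: "\<forall>l<n. sesq n (\<lambda>i j. K' (Suc i) (Suc j)) (h l) (h l) = 0"
    using Suc.IH by blast
  define g where "g = (\<lambda>l t. \<Sum>i<Suc n. lift_basis h l i * U i t)"
  have "orthonormal_basis (Suc n) g"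
    using orthonormal_basis_change_basis orthonormal_basis_lift_basis[OF h] U
    unfolding g_def unitary_def by blast
  moreover have "sesq (Suc n) K (g l) (g l) = 0" if "l < Suc n" for l
  proof -
    have "sesq (Suc n) K (g l) (g l) = sesq (Suc n) K' (lift_basis h l) (lift_basis h l)"
      unfolding g_def K'_def by (rule sesq_change_basis)
    also have "\<dots> = 0"
      using \<open>K' 0 0 = 0\<close> hK that
      by (cases l) (auto simp: lift_basis_def sesq_unit_vec sesq_shift_vec)
    finally show ?thesis .
  qed
  ultimately show ?case
    by blast
qed

section \<open>Triangularizing 2-by-2 matrices\<close>

lemma exists_root_quadratic: "\<exists>\<mu>::complex. \<mu>\<^sup>2 - p * \<mu> + q = 0"
proof
  let ?d = "csqrt (p\<^sup>2 - 4 * q)"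
  have "((p + ?d) / 2)\<^sup>2 - p * ((p + ?d) / 2) + q = (?d\<^sup>2 - p\<^sup>2) / 4 + q"
    by (simp add: field_simps power2_eq_square)
  then show "((p + ?d) / 2)\<^sup>2 - p * ((p + ?d) / 2) + q = 0"
    by simp
qed

lemma exists_eigenvector_2:
  fixes N :: "nat \<Rightarrow> nat \<Rightarrow> complex"
  shows "\<exists>v \<mu>. cinner 2 v v \<noteq> 0 \<and> (\<forall>s<2. (\<Sum>t<2. N s t * v t) = \<mu> * v s)"
proof (cases "N 0 1 = 0")
  case True
  then show ?thesis
    using cinner_unit_vec_self[of 1 2]
    by (intro exI[of _ "unit_vec 1"] exI[of _ "N 1 1"])
      (auto simp: unit_vec_def numeral_2_eq_2 less_Suc_eq)
next
  case False
  obtain \<mu> where \<mu>: "\<mu>\<^sup>2 - (N 0 0 + N 1 1) * \<mu> + (N 0 0 * N 1 1 - N 0 1 * N 1 0) = 0"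
    using exists_root_quadratic by blast
  define v where "v = (\<lambda>t::nat. if t = 0 then N 0 1 else \<mu> - N 0 0)"
  have "cinner 2 v v = of_real ((cmod (N 0 1))\<^sup>2 + (cmod (\<mu> - N 0 0))\<^sup>2)"
    by (simp add: cinner_self v_def numeral_2_eq_2)
  moreover have "(cmod (N 0 1))\<^sup>2 + (cmod (\<mu> - N 0 0))\<^sup>2 \<noteq> 0"
    using False by (simp add: add_nonneg_eq_0_iff)
  ultimately have "cinner 2 v v \<noteq> 0"
    by (metis of_real_eq_0_iff)
  moreover have "(\<Sum>t<2. N s t * v t) = \<mu> * v s" if "s < 2" for s
    using that \<mu> by (auto simp: v_def numeral_2_eq_2 less_Suc_eq power2_eq_square algebra_simps)
  ultimately show ?thesis
    by blast
qed

lemma cinner_normalize: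
  assumes "cinner n v v \<noteq> 0"
  defines "\<rho> \<equiv> sqrt (\<Sum>t<n. (cmod (v t))\<^sup>2)"
  shows "cinner n (\<lambda>t. v t / of_real \<rho>) (\<lambda>t. v t / of_real \<rho>) = 1"
proof -
  have "(\<Sum>t<n. (cmod (v t))\<^sup>2) \<noteq> 0"
    using assms(1) by (metis cinner_self of_real_0)
  then have "\<rho>\<^sup>2 = (\<Sum>t<n. (cmod (v t))\<^sup>2)" and "\<rho> \<noteq> 0"
    by (simp_all add: \<rho>_def sum_nonneg)
  then have v: "cinner n v v = of_real \<rho> * of_real \<rho>" and "complex_of_real \<rho> \<noteq> 0"
    by (simp_all add: cinner_self power2_eq_square flip: of_real_mult)
  have "cinner n (\<lambda>t. v t / of_real \<rho>) (\<lambda>t. v t / of_real \<rho>) =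
      cnj (1 / of_real \<rho>) * (1 / of_real \<rho>) * cinner n v v"
    using cinner_scale[of n "1 / of_real \<rho>" v "1 / of_real \<rho>" v] by simp
  also have "\<dots> = 1"
    using \<open>complex_of_real \<rho> \<noteq> 0\<close> by (simp add: v)
  finally show ?thesis .
qed

lemma exists_orthonormal_basis_2_triangular:
  fixes N :: "nat \<Rightarrow> nat \<Rightarrow> complex"
  shows "\<exists>e. orthonormal_basis 2 e \<and> sesq 2 N (e 1) (e 0) = 0"
proof -
  obtain v \<mu> where v: "cinner 2 v v \<noteq> 0" and eig: "\<forall>s<2. (\<Sum>t<2. N s t * v t) = \<mu> * v s"
    using exists_eigenvector_2 by blast
  define x where "x = (\<lambda>t. v t / of_real (sqrt (\<Sum>t<2. (cmod (v t))\<^sup>2)))"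
  have x: "cinner 2 x x = 1"
    unfolding x_def using v by (rule cinner_normalize)
  have eig_x: "(\<Sum>t<2. N s t * x t) = \<mu> * x s" if "s < 2" for s
    using eig that by (simp add: x_def flip: sum_divide_distrib)
  obtain U where U: "unitary 2 U" and U0: "\<forall>t<2. U 0 t = x t"
    using unit_vector_extends_to_unitary[OF x] by auto
  have "sesq 2 N (U 1) (U 0) = cinner 2 (U 1) (\<lambda>s. \<mu> * U 0 s)"
    unfolding sesq_eq_cinner_mult cinner_def using U0 eig_x by (intro sum.cong) simp_all
  also have "\<dots> = 0"
    using U cinner_scale[of 2 1 "U 1" \<mu> "U 0"]
    by (simp add: unitary_def orthonormal_basis_iff_cinner unit_vec_def)
  finally show ?thesis
    using U unitary_def by blast
qed

section \<open>The tripartite state\<close>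

lemma coeff_unit_vec:
  assumes "i < 2"
  shows "coeff n unit_vec eB eS psi l i j = cinner n (eS l) (\<lambda>t. \<Sum>b<2. cnj (eB j b) * psi i b t)"
proof -
  have "coeff n unit_vec eB eS psi l i j = (\<Sum>b<2. \<Sum>t<n. cnj (eS l t) * (cnj (eB j b) * psi i b t))"
    using assms by (simp add: coeff_def mult_ac sum_unit_vec_mult flip: sum_distrib_left)
  also have "\<dots> = cinner n (eS l) (\<lambda>t. \<Sum>b<2. cnj (eB j b) * psi i b t)"
    by (subst sum.swap) (simp add: cinner_def sum_distrib_left)
  finally show ?thesis .
qed

lemma sum_cinner_components_eq_sesq_gram:
  "(\<Sum>a<2. cinner n (\<lambda>t. \<Sum>b<2. cnj (e 0 b) * psi a b t) (\<lambda>t. \<Sum>b<2. cnj (e 1 b) * psi a b t)) =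
   sesq 2 (\<lambda>s t. \<Sum>a<2. \<Sum>u<n. cnj (psi a t u) * psi a s u) (e 1) (e 0)"
  unfolding cinner_def sesq_def numeral_2_eq_2
  by (simp add: sum.distrib sum_distrib_left algebra_simps)

lemma diagonal2_adj_mult_iff: "diagonal2 (adj_mult M) \<longleftrightarrow> adj_mult M 0 1 = 0"
proof -
  have "adj_mult M 1 0 = cnj (adj_mult M 0 1)"
    by (simp add: adj_mult_def numeral_2_eq_2 mult.commute)
  then show ?thesis
    by (auto simp: diagonal2_def numeral_2_eq_2 less_Suc_eq)
qed

lemma exists_bases_adj_mult_diagonal:
  "\<exists>eA eB eS. orthonormal_basis 2 eA \<and> orthonormal_basis 2 eB \<and> orthonormal_basis n eS \<and>
     (\<forall>l<n. diagonal2 (adj_mult (coeff n eA eB eS psi l)))"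
proof -
  obtain eB where eB: "orthonormal_basis 2 eB"
    and tri: "sesq 2 (\<lambda>s t. \<Sum>a<2. \<Sum>u<n. cnj (psi a t u) * psi a s u) (eB 1) (eB 0) = 0"
    using exists_orthonormal_basis_2_triangular by blast
  define \<phi> where "\<phi> = (\<lambda>a j t. \<Sum>b<2. cnj (eB j b) * psi a b t)"
  define M where "M = (\<lambda>s t. \<Sum>a<2. \<phi> a 1 s * cnj (\<phi> a 0 t))"
  have "mat_trace n M = 0"
    using tri sum_cinner_components_eq_sesq_gram[of n eB psi]
    unfolding M_def mat_trace_outer_sum by (simp add: \<phi>_def)
  then obtain eS where eS: "orthonormal_basis n eS" and diag: "\<forall>l<n. sesq n M (eS l) (eS l) = 0"
    using exists_orthonormal_basis_zero_diagonal by blast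
  have "adj_mult (coeff n unit_vec eB eS psi l) 0 1 = sesq n M (eS l) (eS l)" for l
  proof -
    have "adj_mult (coeff n unit_vec eB eS psi l) 0 1 =
        (\<Sum>a<2. cnj (cinner n (eS l) (\<phi> a 0)) * cinner n (eS l) (\<phi> a 1))"
      unfolding adj_mult_def by (intro sum.cong) (simp_all add: coeff_unit_vec \<phi>_def)
    also have "\<dots> = sesq n M (eS l) (eS l)"
      by (simp add: M_def sesq_outer_sum)
    finally show ?thesis .
  qed
  then have "\<forall>l<n. diagonal2 (adj_mult (coeff n unit_vec eB eS psi l))"
    using diag by (simp add: diagonal2_adj_mult_iff)
  then show ?thesis
    using orthonormal_basis_unit_vec eB eS by blast
qed

lemma mult_adj_coeff_swap:
  "mult_adj (coeff n eB eA eS psi l) i k = cnj (adj_mult (coeff n eA eB eS (\<lambda>a b. psi b a) l) i k)"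
proof -
  have "coeff n eB eA eS psi l i' j = coeff n eA eB eS (\<lambda>a b. psi b a) l j i'" for i' j
    unfolding coeff_def by (subst sum.swap) (simp add: mult_ac)
  then show ?thesis
    by (simp add: mult_adj_def adj_mult_def cnj_sum mult.commute)
qed

lemma exists_bases_mult_adj_diagonal:
  "\<exists>eA eB eS. orthonormal_basis 2 eA \<and> orthonormal_basis 2 eB \<and> orthonormal_basis n eS \<and>
     (\<forall>l<n. diagonal2 (mult_adj (coeff n eA eB eS psi l)))"
proof -
  obtain eA eB eS where "orthonormal_basis 2 eA" "orthonormal_basis 2 eB" "orthonormal_basis n eS"
    and diag: "\<forall>l<n. diagonal2 (adj_mult (coeff n eA eB eS (\<lambda>a b. psi b a) l))"
    using exists_bases_adj_mult_diagonal by blast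
  moreover have "\<forall>l<n. diagonal2 (mult_adj (coeff n eB eA eS psi l))"
    using diag by (simp add: diagonal2_def mult_adj_coeff_swap)
  ultimately show ?thesis
    by blast
qed

theorem lemma5:
  fixes n :: nat and psi :: "nat \<Rightarrow> nat \<Rightarrow> nat \<Rightarrow> complex"
  assumes "n \<ge> 2"
  shows "(\<exists>eA eB eS. orthonormal_basis 2 eA \<and> orthonormal_basis 2 eB \<and> orthonormal_basis n eS \<and>
            (\<forall>l<n. diagonal2 (adj_mult (coeff n eA eB eS psi l))))
       \<and> (\<exists>eA eB eS. orthonormal_basis 2 eA \<and> orthonormal_basis 2 eB \<and> orthonormal_basis n eS \<and>
            (\<forall>l<n. diagonal2 (mult_adj (coeff n eA eB eS psi l))))"
  using exists_bases_adj_mult_diagonal exists_bases_mult_adj_diagonal by blast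

end
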